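(* Let $p$ be a prime and $k>1$ an integer, and let $t$ be a nonnegative integer with $t\le\min\{\log((k-1)/2),\ \log(p/2)\}$. Then for any distinct $g_0,g_1\in\mathbb{Z}_p$, there is no deterministic one-round $k$-party protocol for the Sum-Distinguish problem over $\mathbb{Z}_p$ relative to $g_0,g_1$ with per-party communication complexity $t$.
   Context: Model: parties $P_1,\dots,P_k$ each hold an input $x_i\in\mathbb{Z}_p$; a coordinator (distinct from the parties) wants to compute $f(x_1,\dots,x_k)$. In a deterministic one-round protocol each party sends a single message, a function of its own input only, to the coordinator, who outputs a value depending only on the received messages; there is no other communication. A protocol has per-party communication complexity $t$ if each party always sends exactly $t$ bits. Sum-Distinguish relative to distinct $g_0,g_1\in\mathbb{Z}_p$: the partial function $f$ with $f=1$ if $\sum_i x_i\equiv g_1\pmod p$ and $f=0$ if $\sum_i x_i\equiv g_0\pmod p$ (undefined otherwise); a protocol solves it if the coordinator outputs the correct value on every input on which $f$ is defined. $\log$ is base 2. *)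

theory Defs
  imports Complex_Main "HOL-Computational_Algebra.Primes"
begin

text \<open>Parties are indexed 0..k-1; inputs of party i are residues in {0..<p} (Z_p).
  Party i's message is given by msg i :: nat \<Rightarrow> bool list (a function of its own input only);
  per-party communication complexity t means every message has exactly t bits.
  The coordinator sees only the list of the k received messages and outputs a natural number.\<close>

definition solves_sum_distinguish ::
  "nat \<Rightarrow> nat \<Rightarrow> nat \<Rightarrow> nat \<Rightarrow> nat \<Rightarrow> (nat \<Rightarrow> nat \<Rightarrow> bool list) \<Rightarrow> (bool list list \<Rightarrow> nat) \<Rightarrow> bool"
where
  "solves_sum_distinguish p k t g0 g1 msg dec \<longleftrightarrow>
     (\<forall>i<k. \<forall>x<p. length (msg i x) = t) \<and>
     (\<forall>x :: nat \<Rightarrow> nat. (\<forall>i<k. x i < p) \<longrightarrow>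
        ((\<Sum>i<k. x i) mod p = g1 \<longrightarrow> dec (map (\<lambda>i. msg i (x i)) [0..<k]) = 1) \<and>
        ((\<Sum>i<k. x i) mod p = g0 \<longrightarrow> dec (map (\<lambda>i. msg i (x i)) [0..<k]) = 0))"

end

theory Submission
  imports Defs "HOL-Number_Theory.Cong" "HOL-Library.FuncSet"
begin

text \<open>Each party's message takes at most \<open>2^t\<close> values, so some class \<open>C\<^sub>i\<close> of at least
  \<open>p / 2^t \<ge> 2\<close> inputs of party \<open>i\<close> all produce the same message. The bounds on \<open>t\<close> make
  \<open>\<Sum>\<^sub>i (|C\<^sub>i| - 1) \<ge> p - 1\<close>, so by the Cauchy--Davenport theorem the sumset
  \<open>C\<^sub>1 + \<dots> + C\<^sub>k\<close> is all of \<open>\<int>\<^sub>p\<close>. Hence inputs with sum \<open>g\<^sub>0\<close> and inputs with sum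
  \<open>g\<^sub>1\<close> can be chosen from the classes; they yield identical messages, and the coordinator
  cannot output both answers.\<close>

definition sumset :: "nat \<Rightarrow> nat set \<Rightarrow> nat set \<Rightarrow> nat set" where
  "sumset p A B = (\<lambda>(a, b). (a + b) mod p) ` (A \<times> B)"

lemma inj_on_add_mod: "inj_on (\<lambda>y. (y + e) mod p) {..<(p::nat)}"
  by (rule inj_onI) (metis cong_add_rcancel_nat cong_def lessThan_iff mod_less)

lemma add_mod_closed_eq_residues:
  fixes p :: nat
  assumes "prime p" "A \<subseteq> {..<p}" "a \<in> A" "0 < d" "d < p"
    and closed: "\<And>x. x \<in> A \<Longrightarrow> (x + d) mod p \<in> A"
  shows "A = {..<p}"
proof
  have orbit: "(a + n * d) mod p \<in> A" for n
  proof (induction n)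
    case 0
    then show ?case using assms(2,3) by auto
  next
    case (Suc n)
    have "(a + Suc n * d) mod p = ((a + n * d) mod p + d) mod p"
      by (metis add.assoc mult_Suc add.commute mod_add_left_eq)
    then show ?case using closed[OF Suc] by simp
  qed
  have "coprime d p"
    using assms(1,4,5) by (metis coprime_commute nat_dvd_not_less prime_imp_coprime_nat)
  then obtain u where u: "[d * u = 1] (mod p)"
    using cong_solve_coprime_nat by auto
  show "{..<p} \<subseteq> A"
  proof
    fix y assume y: "y \<in> {..<p}"
    have "[a + (u * (y + p - a)) * d = a + (d * u) * (y + p - a)] (mod p)"
      by (simp only: mult_ac cong_refl)
    also have "[a + (d * u) * (y + p - a) = a + 1 * (y + p - a)] (mod p)"
      by (intro cong_add cong_mult u cong_refl)
    also have "a + 1 * (y + p - a) = y + p"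
      using assms(2,3) by auto
    also have "[y + p = y] (mod p)"
      by (simp add: cong_def)
    finally show "y \<in> A"
      using orbit[of "u * (y + p - a)"] y by (simp add: cong_def)
  qed
qed (use assms(2) in auto)

lemma exists_separating_shift:
  fixes p :: nat
  assumes "prime p" "A \<subseteq> {..<p}" "A \<noteq> {}" "A \<noteq> {..<p}"
    and "b < p" "b' < p" "b \<noteq> b'"
  shows "\<exists>e. (b + e) mod p \<in> A \<and> (b' + e) mod p \<notin> A"
proof -
  define d where "d = (b' + p - b) mod p"
  have "d \<noteq> 0"
  proof
    assume "d = 0"
    then have "p dvd b' + p - b" unfolding d_def by auto
    moreover have "0 < b' + p - b" "b' + p - b < 2 * p" "b' + p - b \<noteq> p"
      using assms(5-7) by auto
    ultimately show False by (auto elim!: dvdE simp: less_2_cases_iff)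
  qed
  moreover have "d < p"
    unfolding d_def using assms(5) by auto
  ultimately obtain a where a: "a \<in> A" "(a + d) mod p \<notin> A"
    using add_mod_closed_eq_residues[OF assms(1,2)] assms(3,4) by blast
  have "a < p" using a(1) assms(2) by auto
  define e where "e = (a + p - b) mod p"
  have "(b + e) mod p = (a + p) mod p"
    unfolding e_def using assms(5) by (simp add: mod_add_right_eq)
  moreover have "(b' + e) mod p = (a + d) mod p"
    unfolding e_def d_def using assms(5) by (simp add: mod_add_right_eq mod_add_left_eq algebra_simps)
  ultimately show ?thesis
    using a \<open>a < p\<close> by auto
qed

lemma sumset_dyson_transform:
  fixes p :: nat
  assumes "A \<subseteq> {..<p}" "B \<subseteq> {..<p}"
    and c: "c \<in> B" "(c + e) mod p \<in> A" and c': "c' \<in> B" "(c' + e) mod p \<notin> A"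
  defines "A' \<equiv> A \<union> (\<lambda>y. (y + e) mod p) ` B" and "B' \<equiv> {y \<in> B. (y + e) mod p \<in> A}"
  shows "c \<in> B'" and "B' \<subset> B" and "card A' + card B' = card A + card B"
    and "sumset p A' B' \<subseteq> sumset p A B"
proof -
  have fin: "finite A" "finite B"
    using assms(1,2) finite_subset by auto
  show "c \<in> B'" "B' \<subset> B"
    using c c' unfolding B'_def by auto
  then have "card B' \<le> card B"
    using fin(2) by (simp add: psubset_card_mono less_imp_le)
  have "A' = A \<union> (\<lambda>y. (y + e) mod p) ` (B - B')"
    unfolding A'_def B'_def by auto
  moreover have "A \<inter> (\<lambda>y. (y + e) mod p) ` (B - B') = {}"
    unfolding B'_def by auto
  moreover have "card ((\<lambda>y. (y + e) mod p) ` (B - B')) = card (B - B')"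
    using assms(2) by (intro card_image inj_on_subset[OF inj_on_add_mod]) auto
  moreover have "card (B - B') = card B - card B'"
    using \<open>B' \<subset> B\<close> fin(2) by (meson card_Diff_subset finite_subset psubset_imp_subset)
  ultimately show "card A' + card B' = card A + card B"
    using fin \<open>card B' \<le> card B\<close> by (simp add: card_Un_disjoint)
  show "sumset p A' B' \<subseteq> sumset p A B"
  proof
    fix s assume "s \<in> sumset p A' B'"
    then obtain x y where xy: "x \<in> A'" "y \<in> B'" "s = (x + y) mod p"
      unfolding sumset_def by auto
    show "s \<in> sumset p A B"
    proof (cases "x \<in> A")
      case True
      then show ?thesis using xy unfolding B'_def sumset_def by auto
    next
      case False
      then obtain z where z: "z \<in> B" "x = (z + e) mod p"
        using xy(1) unfolding A'_def by auto
      \<comment> \<open>the pair \<open>(z + e, y)\<close> is traded for \<open>(y + e, z)\<close>, which has the same sum\<close>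
      have "s = ((y + e) mod p + z) mod p"
        using xy(3) z(2) by (simp add: mod_add_left_eq mod_add_right_eq algebra_simps)
      then show ?thesis
        using z(1) xy(2) unfolding B'_def sumset_def by auto
    qed
  qed
qed

theorem cauchy_davenport:
  fixes p :: nat
  assumes "prime p" "A \<subseteq> {..<p}" "B \<subseteq> {..<p}" "A \<noteq> {}" "B \<noteq> {}"
  shows "min p (card A + card B - 1) \<le> card (sumset p A B)"
  using assms(2-)
proof (induction "card B" arbitrary: A B rule: less_induct)
  case less
  have fin: "finite A" "finite B"
    using less.prems(1,2) finite_subset by auto
  then have fin_sumset: "finite (sumset p A B)"
    unfolding sumset_def by simp
  obtain b where b: "b \<in> B"
    using less.prems(4) by auto
  have "card A = card ((\<lambda>y. (y + b) mod p) ` A)"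
    using less.prems(1) by (intro card_image[symmetric] inj_on_subset[OF inj_on_add_mod])
  also have "\<dots> \<le> card (sumset p A B)"
    using b by (intro card_mono fin_sumset) (force simp: sumset_def)
  finally have card_A_le: "card A \<le> card (sumset p A B)" .
  show ?case
  proof (cases "B = {b} \<or> A = {..<p}")
    case True
    then show ?thesis using card_A_le by auto
  next
    case False
    then obtain b' where b': "b' \<in> B" "b' \<noteq> b"
      using b by blast
    obtain e where e: "(b + e) mod p \<in> A" "(b' + e) mod p \<notin> A"
      using exists_separating_shift[OF assms(1) less.prems(1,3)] False b b' less.prems(2) by blast
    define A' where "A' = A \<union> (\<lambda>y. (y + e) mod p) ` B"
    define B' where "B' = {y \<in> B. (y + e) mod p \<in> A}"
    note dyson = sumset_dyson_transform[OF less.prems(1,2) b e(1) b'(1) e(2),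
        folded A'_def B'_def]
    have "A' \<subseteq> {..<p}"
      using less.prems(1) assms(1) prime_gt_0_nat unfolding A'_def by auto
    then have "min p (card A' + card B' - 1) \<le> card (sumset p A' B')"
      using dyson(1,2) less.prems(2) fin(2) less.prems(3) unfolding A'_def
      by (intro less.hyps psubset_card_mono) auto
    then show ?thesis
      using dyson(3) card_mono[OF fin_sumset dyson(4)] by simp
  qed
qed

fun iterated_sumset :: "nat \<Rightarrow> (nat \<Rightarrow> nat set) \<Rightarrow> nat \<Rightarrow> nat set" where
  "iterated_sumset p C 0 = {0}"
| "iterated_sumset p C (Suc j) = sumset p (iterated_sumset p C j) (C j)"

lemma iterated_sumset_subset:
  fixes p :: nat
  assumes "0 < p"
  shows "iterated_sumset p C j \<subseteq> {..<p}"
  using assms by (cases j) (auto simp: sumset_def)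

lemma iterated_sumset_nonempty:
  assumes "\<And>i. i < j \<Longrightarrow> C i \<noteq> {}"
  shows "iterated_sumset p C j \<noteq> {}"
  using assms by (induction j) (auto simp: sumset_def)

lemma card_iterated_sumset_ge:
  fixes p :: nat
  assumes "prime p" and C: "\<And>i. i < j \<Longrightarrow> C i \<subseteq> {..<p} \<and> C i \<noteq> {}"
  shows "min p (1 + (\<Sum>i<j. card (C i) - 1)) \<le> card (iterated_sumset p C j)"
  using C
proof (induction j)
  case 0
  then show ?case by simp
next
  case (Suc j)
  let ?S = "iterated_sumset p C j"
  have "C j \<subseteq> {..<p}" "C j \<noteq> {}"
    using Suc.prems by auto
  then have "1 \<le> card (C j)"
    using finite_subset by (fastforce simp: Suc_le_eq card_gt_0_iff)
  moreover have "min p (1 + (\<Sum>i<j. card (C i) - 1)) \<le> card ?S"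
    using Suc by simp
  moreover have "?S \<subseteq> {..<p}" "?S \<noteq> {}"
    using iterated_sumset_subset prime_gt_0_nat[OF assms(1)] iterated_sumset_nonempty Suc.prems
    by auto
  then have "min p (card ?S + card (C j) - 1) \<le> card (iterated_sumset p C (Suc j))"
    using cauchy_davenport[OF assms(1)] \<open>C j \<subseteq> {..<p}\<close> \<open>C j \<noteq> {}\<close> by simp
  ultimately show ?case
    by (simp add: min_le_iff_disj) linarith
qed

lemma iterated_sumset_eq_residues:
  fixes p :: nat
  assumes "prime p" and "\<And>i. i < j \<Longrightarrow> C i \<subseteq> {..<p} \<and> C i \<noteq> {}"
    and "p - 1 \<le> (\<Sum>i<j. card (C i) - 1)"
  shows "iterated_sumset p C j = {..<p}"
proof -
  have "card {..<p} \<le> card (iterated_sumset p C j)"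
  proof -
    have "min p (1 + (\<Sum>i<j. card (C i) - 1)) \<le> card (iterated_sumset p C j)"
      using assms(1,2) by (rule card_iterated_sumset_ge)
    then show ?thesis using assms(3) by simp
  qed
  then show ?thesis
    using iterated_sumset_subset[OF prime_gt_0_nat[OF assms(1)]] by (simp add: card_seteq)
qed

lemma mem_iterated_sumset_imp_sum:
  "g \<in> iterated_sumset p C j \<Longrightarrow> \<exists>x. (\<forall>i<j. x i \<in> C i) \<and> (\<Sum>i<j. x i) mod p = g"
proof (induction j arbitrary: g)
  case 0
  then show ?case by simp
next
  case (Suc j)
  then obtain a c where ac: "a \<in> iterated_sumset p C j" "c \<in> C j" "g = (a + c) mod p"
    by (auto simp: sumset_def)
  obtain x where x: "\<forall>i<j. x i \<in> C i" "(\<Sum>i<j. x i) mod p = a"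
    using Suc.IH[OF ac(1)] by blast
  have "(\<Sum>i<j. (x(j := c)) i) = (\<Sum>i<j. x i)"
    by (intro sum.cong) auto
  then have "(\<Sum>i<Suc j. (x(j := c)) i) = (\<Sum>i<j. x i) + c"
    by simp
  then have "(\<Sum>i<Suc j. (x(j := c)) i) mod p = g"
    using ac(3) x(2) mod_add_left_eq by metis
  moreover have "\<forall>i<Suc j. (x(j := c)) i \<in> C i"
    using x(1) ac(2) by (auto simp: less_Suc_eq)
  ultimately show ?case by blast
qed

lemma pow2_le_of_le_log:
  fixes x :: real
  assumes "0 < x" "real t \<le> log 2 x"
  shows "2 ^ t \<le> x"
  using assms by (simp add: le_log_iff powr_realpow)

lemma exists_large_message_class:
  fixes f :: "nat \<Rightarrow> bool list"
  assumes "0 < n" "\<And>x. x < n \<Longrightarrow> length (f x) = t"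
  shows "\<exists>m. n \<le> card {x \<in> {..<n}. f x = m} * 2 ^ t"
proof -
  have "card {xs :: bool list. length xs = t} = 2 ^ t"
    using card_lists_length_eq[of "UNIV :: bool set" t] by simp
  moreover have "finite {xs :: bool list. length xs = t}"
    using finite_lists_length_eq[of "UNIV :: bool set" t] by simp
  moreover have "{xs :: bool list. length xs = t} \<noteq> {}"
    using assms by auto
  ultimately obtain m where "card (f -` {m} \<inter> {..<n}) * 2 ^ t \<ge> card {..<n}"
    using pigeonhole_card[of f "{..<n}" "{xs. length xs = t}"] assms(2) by auto
  moreover have "f -` {m} \<inter> {..<n} = {x \<in> {..<n}. f x = m}"
    by auto
  ultimately show ?thesis
    by auto
qed

lemma sum_pred_ge_of_large_terms:
  fixes p k M :: nat and c :: "nat \<Rightarrow> nat"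
  assumes large: "\<And>i. i < k \<Longrightarrow> p \<le> c i * M" and "2 * M \<le> p" "2 * M + 1 \<le> k"
  shows "p - 1 \<le> (\<Sum>i<k. c i - 1)"
proof -
  have term_bound: "p - 1 \<le> k * (c i - 1)" if "i < k" for i
  proof (cases "c i \<le> 1")
    case True
    then show ?thesis using large[OF that] assms(2) by (cases "c i") auto
  next
    case False
    have "p \<le> c i * M" using large[OF that] .
    also have "\<dots> \<le> (2 * (c i - 1)) * M"
      using False by (intro mult_right_mono) auto
    also have "\<dots> = (2 * M) * (c i - 1)"
      by simp
    also have "\<dots> \<le> k * (c i - 1)"
      using assms(3) by (intro mult_right_mono) auto
    finally show ?thesis by simp
  qed
  have "k * (p - 1) = (\<Sum>i<k. p - 1)"
    by simp
  also have "\<dots> \<le> (\<Sum>i<k. k * (c i - 1))"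
    by (intro sum_mono term_bound) simp
  also have "\<dots> = k * (\<Sum>i<k. c i - 1)"
    by (simp add: sum_distrib_left)
  finally show ?thesis
    using assms(3) by simp
qed

lemma solves_sum_distinguish_message_classes:
  fixes p :: nat
  assumes "solves_sum_distinguish p k t g0 g1 msg dec" "0 < p"
  obtains C where "\<And>i. C i \<subseteq> {..<p}" "\<And>i. i < k \<Longrightarrow> p \<le> card (C i) * 2 ^ t"
    and "\<And>i x y. x \<in> C i \<Longrightarrow> y \<in> C i \<Longrightarrow> msg i x = msg i y"
proof -
  have "\<exists>m. p \<le> card {x \<in> {..<p}. msg i x = m} * 2 ^ t" if "i < k" for i
    using assms that unfolding solves_sum_distinguish_def
    by (intro exists_large_message_class) auto
  then obtain m where "\<And>i. i < k \<Longrightarrow> p \<le> card {x \<in> {..<p}. msg i x = m i} * 2 ^ t"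
    by metis
  then show ?thesis
    by (intro that[of "\<lambda>i. {x \<in> {..<p}. msg i x = m i}"]) auto
qed

lemma not_solves_sum_distinguish_if_sumset_full:
  fixes p k :: nat
  assumes "g0 < p" "g1 < p" "g0 \<noteq> g1"
    and full: "iterated_sumset p C k = {..<p}"
    and classes: "\<And>i. i < k \<Longrightarrow> C i \<subseteq> {..<p}"
    and msg_const: "\<And>i x y. i < k \<Longrightarrow> x \<in> C i \<Longrightarrow> y \<in> C i \<Longrightarrow> msg i x = msg i y"
  shows "\<not> solves_sum_distinguish p k t g0 g1 msg dec"
proof
  assume sol: "solves_sum_distinguish p k t g0 g1 msg dec"
  obtain x0 where x0: "\<forall>i<k. x0 i \<in> C i" "(\<Sum>i<k. x0 i) mod p = g0"
    using mem_iterated_sumset_imp_sum[of g0 p C k] full assms(1) by auto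
  obtain x1 where x1: "\<forall>i<k. x1 i \<in> C i" "(\<Sum>i<k. x1 i) mod p = g1"
    using mem_iterated_sumset_imp_sum[of g1 p C k] full assms(2) by auto
  have "map (\<lambda>i. msg i (x0 i)) [0..<k] = map (\<lambda>i. msg i (x1 i)) [0..<k]"
    using x0(1) x1(1) msg_const by (intro map_cong) auto
  moreover have "\<forall>i<k. x0 i < p" "\<forall>i<k. x1 i < p"
    using x0(1) x1(1) classes by blast+
  ultimately show False
    using sol x0(2) x1(2) assms(3) unfolding solves_sum_distinguish_def by (metis zero_neq_one)
qed

theorem theorem3p4:
  fixes p k t g0 g1 :: nat
  assumes "prime p" and "k > 1"
    and "real t \<le> log 2 ((real k - 1) / 2)" and "real t \<le> log 2 (real p / 2)"
    and "g0 < p" and "g1 < p" and "g0 \<noteq> g1"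
  shows "\<not> (\<exists>msg dec. solves_sum_distinguish p k t g0 g1 msg dec)"
proof (intro notI, elim exE)
  fix msg dec
  assume sol: "solves_sum_distinguish p k t g0 g1 msg dec"
  have p_pos: "0 < p"
    using assms(1) prime_gt_0_nat by blast
  have "real (2 * 2 ^ t + 1) \<le> real k"
    using pow2_le_of_le_log[OF _ assms(3)] assms(2) by simp
  then have k_large: "2 * 2 ^ t + 1 \<le> k"
    by (simp only: of_nat_le_iff)
  have "real (2 * 2 ^ t) \<le> real p"
    using pow2_le_of_le_log[OF _ assms(4)] p_pos by simp
  then have p_large: "2 * 2 ^ t \<le> p"
    by (simp only: of_nat_le_iff)
  obtain C where C_sub: "\<And>i. C i \<subseteq> {..<p}" and C_large: "\<And>i. i < k \<Longrightarrow> p \<le> card (C i) * 2 ^ t"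
    and C_const: "\<And>i x y. x \<in> C i \<Longrightarrow> y \<in> C i \<Longrightarrow> msg i x = msg i y"
    using solves_sum_distinguish_message_classes[OF sol p_pos] by blast
  have C_class: "C i \<subseteq> {..<p} \<and> C i \<noteq> {}" if "i < k" for i
    using C_sub C_large[OF that] p_pos by auto
  have "p - 1 \<le> (\<Sum>i<k. card (C i) - 1)"
    using C_large p_large k_large by (rule sum_pred_ge_of_large_terms)
  with assms(1) C_class have "iterated_sumset p C k = {..<p}"
    by (rule iterated_sumset_eq_residues)
  then have "\<not> solves_sum_distinguish p k t g0 g1 msg dec"
    by (rule not_solves_sum_distinguish_if_sumset_full[OF assms(5-7)]) (use C_sub C_const in blast)+
  then show False
    using sol by contradiction
qed

end
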